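(* Let $(X,\mathcal{O}(X))$ be a measurable space, $\mathcal{A}$ a unital $C^*$-algebra and $\mathcal{H}$ a Hilbert space. Let $\mathcal{I}:\mathcal{O}(X)\to CP(\mathcal{A},\mathcal{B}(\mathcal{H}))$ be a CP instrument with minimal bi-dilation $(\mathcal{K},\pi,E,V)$. Let $P_1,P_2$ be the orthogonal projections onto $\overline{\mathrm{span}}\{\pi(a)Vh:a\in\mathcal{A},h\in\mathcal{H}\}$ and $\overline{\mathrm{span}}\{E(A)Vh:A\in\mathcal{O}(X),h\in\mathcal{H}\}$ respectively. Then the following are equivalent: (i) $\mathcal{I}$ is decomposable; (ii) $P_1E(A)P_1VV^*=VV^*P_1E(A)P_1VV^*=VV^*P_1E(A)P_1$ for all $A\in\mathcal{O}(X)$; (iii) $P_2\pi(a)P_2VV^*=VV^*P_2\pi(a)P_2VV^*=VV^*\pi(a)P_2$ for all $a\in\mathcal{A}$.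
   Context: A CP instrument is a map $\mathcal{I}$ from $\mathcal{O}(X)$ to the completely positive maps $\mathcal{A}\to\mathcal{B}(\mathcal{H})$ such that for all $a\in\mathcal{A}$, $h,k\in\mathcal{H}$, $A\mapsto\langle h,\mathcal{I}(A)(a)k\rangle$ is a countably additive complex measure; write $\mathcal{I}(A,a)=\mathcal{I}(A)(a)$. Marginals: $\mu_\mathcal{I}(A)=\mathcal{I}(A,1_\mathcal{A})$, $\phi_\mathcal{I}=\mathcal{I}(X,\cdot)$. $\mathcal{I}$ is decomposable if $\mathcal{I}(A,a)=\phi_\mathcal{I}(a)\mu_\mathcal{I}(A)$ for all $a\in\mathcal{A}$, $A\in\mathcal{O}(X)$. A minimal bi-dilation of $\mathcal{I}$ is a quadruple $(\mathcal{K},\pi,E,V)$ with $\pi:\mathcal{A}\to\mathcal{B}(\mathcal{K})$ a unital $*$-homomorphism, $E:\mathcal{O}(X)\to\mathcal{B}(\mathcal{K})$ a spectral measure commuting with $\pi$, $V\in\mathcal{B}(\mathcal{H},\mathcal{K})$, with $\mathcal{I}(A,a)=V^*\pi(a)E(A)V$ for all $A,a$ and $\overline{\mathrm{span}}\{\pi(a)E(A)Vh\}=\mathcal{K}$; it exists and is unique up to unitary equivalence. *)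

theory Defs
  imports "HOL-Analysis.Analysis"
begin

class complex_vector = real_vector +
  fixes scaleC :: "complex \<Rightarrow> 'a \<Rightarrow> 'a" (infixr \<open>*\<^sub>C\<close> 75)
  assumes scaleC_add_right: "scaleC c (x + y) = scaleC c x + scaleC c y"
    and scaleC_add_left: "scaleC (c + d) x = scaleC c x + scaleC d x"
    and scaleC_scaleC: "scaleC c (scaleC d x) = scaleC (c * d) x"
    and scaleC_one: "scaleC 1 x = x"
    and scaleR_scaleC: "scaleR r x = scaleC (complex_of_real r) x"

class complex_normed_vector = real_normed_vector + complex_vector +
  assumes norm_scaleC: "norm (scaleC c x) = cmod c * norm x"

text \<open>Complex inner product: conjugate-linear in the first, linear in the second argument.\<close>
class complex_inner = complex_normed_vector +
  fixes cinner :: "'a \<Rightarrow> 'a \<Rightarrow> complex"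
  assumes cinner_conj: "cinner x y = cnj (cinner y x)"
    and cinner_add_right: "cinner x (y + z) = cinner x y + cinner x z"
    and cinner_scaleC_right: "cinner x (scaleC c y) = c * cinner x y"
    and cinner_self_nonneg: "0 \<le> Re (cinner x x)"
    and norm_eq_sqrt_cinner: "norm x = sqrt (Re (cinner x x))"

class chilbert_space = complex_inner + complete_space

class cstar_algebra_1 = complex_normed_vector + real_normed_algebra_1 + banach +
  fixes cstar :: "'a \<Rightarrow> 'a"
  assumes scaleC_mult_left: "scaleC c (x * y) = scaleC c x * y"
    and scaleC_mult_right: "scaleC c (x * y) = x * scaleC c y"
    and cstar_cstar: "cstar (cstar x) = x"
    and cstar_add: "cstar (x + y) = cstar x + cstar y"
    and cstar_scaleC: "cstar (scaleC c x) = scaleC (cnj c) (cstar x)"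
    and cstar_mult: "cstar (x * y) = cstar y * cstar x"
    and cstar_identity: "norm (cstar x * x) = (norm x)\<^sup>2"

definition cblinear :: "('a::complex_normed_vector \<Rightarrow> 'b::complex_normed_vector) \<Rightarrow> bool" where
  "cblinear T \<longleftrightarrow> (\<forall>x y. T (x + y) = T x + T y) \<and> (\<forall>c x. T (c *\<^sub>C x) = c *\<^sub>C T x)
     \<and> (\<exists>K. \<forall>x. norm (T x) \<le> norm x * K)"

definition adj :: "('h::chilbert_space \<Rightarrow> 'k::chilbert_space) \<Rightarrow> ('k \<Rightarrow> 'h)" where
  "adj T = (THE S. \<forall>x y. cinner (T x) y = cinner x (S y))"

definition cspan :: "'a::complex_vector set \<Rightarrow> 'a set" where
  "cspan S = {x. \<exists>F c. finite F \<and> F \<subseteq> S \<and> x = (\<Sum>s\<in>F. c s *\<^sub>C s)}"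

definition is_orth_proj :: "('h::chilbert_space \<Rightarrow> 'h) \<Rightarrow> 'h set \<Rightarrow> bool" where
  "is_orth_proj P C \<longleftrightarrow> (\<forall>x. P x \<in> C \<and> (\<forall>y\<in>C. cinner y (x - P x) = 0))"

definition is_proj :: "('h::chilbert_space \<Rightarrow> 'h) \<Rightarrow> bool" where
  "is_proj P \<longleftrightarrow> cblinear P \<and> P \<circ> P = P \<and> adj P = P"

text \<open>A linear map \<open>\<phi> : A \<rightarrow> B(H)\<close> is completely positive if every amplification
  \<open>\<phi>\<^sub>n : M\<^sub>n(A) \<rightarrow> M\<^sub>n(B(H)) = B(H\<^sup>n)\<close> is positive. Positive elements of \<open>M\<^sub>n(A)\<close> are those of the
  form \<open>B\<^sup>*B\<close>, and positivity of an operator matrix \<open>T\<close> on \<open>H\<^sup>n\<close> means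
  \<open>\<Sum>\<^sub>i\<^sub>j \<langle>h\<^sub>i, T\<^sub>i\<^sub>j h\<^sub>j\<rangle> \<ge> 0\<close> for all \<open>h\<close>.\<close>
definition completely_positive :: "('a::cstar_algebra_1 \<Rightarrow> ('h::chilbert_space \<Rightarrow> 'h)) \<Rightarrow> bool" where
  "completely_positive \<phi> \<longleftrightarrow>
     (\<forall>a. cblinear (\<phi> a)) \<and>
     (\<forall>a b. \<phi> (a + b) = (\<lambda>x. \<phi> a x + \<phi> b x)) \<and>
     (\<forall>c a. \<phi> (c *\<^sub>C a) = (\<lambda>x. c *\<^sub>C \<phi> a x)) \<and>
     (\<forall>(n::nat) (B::nat \<Rightarrow> nat \<Rightarrow> 'a) (h::nat \<Rightarrow> 'h).
        let s = (\<Sum>i<n. \<Sum>j<n. cinner (h i) (\<phi> (\<Sum>k<n. cstar (B k i) * B k j) (h j)))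
        in Im s = 0 \<and> 0 \<le> Re s)"

definition cp_instrument ::
  "'x measure \<Rightarrow> ('x set \<Rightarrow> 'a::cstar_algebra_1 \<Rightarrow> 'h::chilbert_space \<Rightarrow> 'h) \<Rightarrow> bool" where
  "cp_instrument M I \<longleftrightarrow>
     (\<forall>A\<in>sets M. completely_positive (I A)) \<and>
     (\<forall>a h k F. range F \<subseteq> sets M \<longrightarrow> disjoint_family F \<longrightarrow>
        (\<lambda>n. cinner h (I (F n) a k)) sums cinner h (I (\<Union>n. F n) a k))"

definition instr_obs :: "('x set \<Rightarrow> 'a::cstar_algebra_1 \<Rightarrow> 'h \<Rightarrow> 'h) \<Rightarrow> 'x set \<Rightarrow> 'h \<Rightarrow> 'h" where
  "instr_obs I A = I A 1"

definition instr_channel :: "'x measure \<Rightarrow> ('x set \<Rightarrow> 'a \<Rightarrow> 'h \<Rightarrow> 'h) \<Rightarrow> 'a \<Rightarrow> 'h \<Rightarrow> 'h" where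
  "instr_channel M I = I (space M)"

definition decomposable ::
  "'x measure \<Rightarrow> ('x set \<Rightarrow> 'a::cstar_algebra_1 \<Rightarrow> 'h::chilbert_space \<Rightarrow> 'h) \<Rightarrow> bool" where
  "decomposable M I \<longleftrightarrow>
     (\<forall>a. \<forall>A\<in>sets M. I A a = instr_channel M I a \<circ> instr_obs I A)"

definition spectral_measure :: "'x measure \<Rightarrow> ('x set \<Rightarrow> 'k::chilbert_space \<Rightarrow> 'k) \<Rightarrow> bool" where
  "spectral_measure M E \<longleftrightarrow>
     (\<forall>A\<in>sets M. is_proj (E A)) \<and> E (space M) = id \<and>
     (\<forall>A\<in>sets M. \<forall>B\<in>sets M. E (A \<inter> B) = E A \<circ> E B) \<and>
     (\<forall>h k F. range F \<subseteq> sets M \<longrightarrow> disjoint_family F \<longrightarrow>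
        (\<lambda>n. cinner h (E (F n) k)) sums cinner h (E (\<Union>n. F n) k))"

definition unital_star_hom :: "('a::cstar_algebra_1 \<Rightarrow> ('k::chilbert_space \<Rightarrow> 'k)) \<Rightarrow> bool" where
  "unital_star_hom \<pi> \<longleftrightarrow>
     (\<forall>a. cblinear (\<pi> a)) \<and>
     (\<forall>a b. \<pi> (a + b) = (\<lambda>x. \<pi> a x + \<pi> b x)) \<and>
     (\<forall>c a. \<pi> (c *\<^sub>C a) = (\<lambda>x. c *\<^sub>C \<pi> a x)) \<and>
     (\<forall>a b. \<pi> (a * b) = \<pi> a \<circ> \<pi> b) \<and>
     (\<forall>a. \<pi> (cstar a) = adj (\<pi> a)) \<and>
     \<pi> 1 = id"

definition minimal_bidilation ::
  "'x measure \<Rightarrow> ('x set \<Rightarrow> 'a::cstar_algebra_1 \<Rightarrow> 'h::chilbert_space \<Rightarrow> 'h)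
    \<Rightarrow> ('a \<Rightarrow> 'k::chilbert_space \<Rightarrow> 'k) \<Rightarrow> ('x set \<Rightarrow> 'k \<Rightarrow> 'k) \<Rightarrow> ('h \<Rightarrow> 'k) \<Rightarrow> bool" where
  "minimal_bidilation M I \<pi> E V \<longleftrightarrow>
     unital_star_hom \<pi> \<and> spectral_measure M E \<and>
     (\<forall>a. \<forall>A\<in>sets M. \<pi> a \<circ> E A = E A \<circ> \<pi> a) \<and>
     cblinear V \<and>
     (\<forall>a. \<forall>A\<in>sets M. I A a = adj V \<circ> \<pi> a \<circ> E A \<circ> V) \<and>
     closure (cspan {\<pi> a (E A (V h)) | a A h. A \<in> sets M}) = UNIV"

end

theory Submission
  imports Defs
begin

(*
  Write W = V V*. With phi(a) = V* pi(a) V and mu(A) = V* E(A) V, decomposability reads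
  V* pi(a) E(A) V = V* pi(a) W E(A) V. Pairing with V k and moving pi(a) across turns this into
  the statement that E(A) V h - W E(A) V h is orthogonal to every pi(b) V k, i.e. that P1 kills it:
  P1 E(A) W = W E(A) W. Taking adjoints gives W E(A) W = W E(A) P1. For a = 1 and A = X
  decomposability says that V* V is idempotent, so V is a partial isometry and W is a projection
  with P1 W = W = W P1; this turns the two identities into (ii), and conversely already the first
  identity of (ii) yields decomposability. Taking adjoints also shows that decomposability is
  symmetric in the two families {pi(a)} and {E(A)}, so (iii) is (ii) with their roles exchanged.
*)

lemma cinner_add_left: "cinner (x + y) (z::'a::complex_inner) = cinner x z + cinner y z"
  by (subst (1 2 3) cinner_conj) (simp add: cinner_add_right)

lemma cinner_scaleC_left: "cinner (c *\<^sub>C x) (y::'a::complex_inner) = cnj c * cinner x y"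
  by (subst (1 2) cinner_conj) (simp add: cinner_scaleC_right)

lemma cinner_zero_right [simp]: "cinner (x::'a::complex_inner) 0 = 0"
proof -
  have "cinner x (0::'a) + cinner x 0 = cinner x 0" by (simp flip: cinner_add_right)
  then show ?thesis by simp
qed

lemma cinner_zero_left [simp]: "cinner 0 (x::'a::complex_inner) = 0"
  by (subst cinner_conj) simp

lemma cinner_diff_right: "cinner x (y - z) = cinner x y - cinner (x::'a::complex_inner) z"
proof -
  have "cinner x (y - z) + cinner x z = cinner x y" by (simp flip: cinner_add_right)
  then show ?thesis by (simp add: eq_diff_eq)
qed

lemma cinner_diff_left: "cinner (x - y) z = cinner x z - cinner (y::'a::complex_inner) z"
  by (subst (1 2 3) cinner_conj) (simp add: cinner_diff_right)

lemma cinner_sum_left: "cinner (\<Sum>s\<in>F. f s) (y::'a::complex_inner) = (\<Sum>s\<in>F. cinner (f s) y)"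
  by (induction F rule: infinite_finite_induct) (auto simp: cinner_add_left)

lemma Re_cinner_self: "Re (cinner x x) = (norm (x::'a::complex_inner))\<^sup>2"
  by (simp add: norm_eq_sqrt_cinner cinner_self_nonneg)

lemma cinner_self_eq_0 [simp]: "cinner x x = 0 \<longleftrightarrow> (x::'a::complex_inner) = 0"
proof
  assume "cinner x x = 0"
  then have "norm x = 0" by (simp add: norm_eq_sqrt_cinner)
  then show "x = 0" by simp
qed simp

lemma cinner_right_eqI: "(\<And>z. cinner z x = cinner z y) \<Longrightarrow> x = (y::'a::complex_inner)"
  by (metis cinner_diff_right cinner_self_eq_0 eq_iff_diff_eq_0)

lemma norm_add_sq:
  "(norm (x + y))\<^sup>2 = (norm x)\<^sup>2 + (norm y)\<^sup>2 + 2 * Re (cinner x (y::'a::complex_inner))"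
proof -
  have "Re (cinner y x) = Re (cinner x y)" by (subst cinner_conj) simp
  then show ?thesis by (simp flip: Re_cinner_self add: cinner_add_left cinner_add_right)
qed

lemma parallelogram_law:
  "(norm (x - y))\<^sup>2 + (norm (x + y))\<^sup>2 = 2 * (norm x)\<^sup>2 + 2 * (norm (y::'a::complex_inner))\<^sup>2"
  using norm_add_sq[of x y] norm_add_sq[of x "- y"] cinner_diff_right[of x 0 y] by simp

lemma norm_sq_remove_component:
  fixes x y :: "'a::complex_inner"
  assumes "y \<noteq> 0"
  shows "(norm (x + (- cinner y x / of_real ((norm y)\<^sup>2)) *\<^sub>C y))\<^sup>2
    = (norm x)\<^sup>2 - (cmod (cinner x y))\<^sup>2 / (norm y)\<^sup>2"
proof -
  define r where "r = (norm y)\<^sup>2"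
  define c where "c = cinner y x"
  have r: "r > 0" using assms by (simp add: r_def)
  have xy: "cinner x y = cnj c" unfolding c_def by (rule cinner_conj)
  have Re_c: "Re (- c / of_real r * cnj c) = - ((cmod c)\<^sup>2 / r)"
  proof -
    have "- c / of_real r * cnj c = - (c * cnj c) / of_real r" by simp
    also have "\<dots> = - of_real ((cmod c)\<^sup>2 / r)" by (simp flip: complex_norm_square)
    finally show ?thesis by (simp only: Re_complex_of_real uminus_complex.sel(1))
  qed
  have "cmod (- c / of_real r) = cmod c / r" using r by (simp add: norm_divide)
  then have "(cmod (- c / of_real r) * norm y)\<^sup>2 = (cmod c)\<^sup>2 / r"
    using r by (simp add: power_mult_distrib power_divide flip: r_def) (simp add: power2_eq_square)
  then show ?thesis
    unfolding norm_add_sq norm_scaleC cinner_scaleC_right xy Re_c c_def[symmetric] r_def[symmetric]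
    by simp
qed

lemma cmod_cinner_le: "cmod (cinner x y) \<le> norm x * norm (y::'a::complex_inner)"
proof (cases "y = 0")
  case False
  have "0 \<le> (norm x)\<^sup>2 - (cmod (cinner x y))\<^sup>2 / (norm y)\<^sup>2"
    by (simp flip: norm_sq_remove_component[OF False])
  then have "(cmod (cinner x y))\<^sup>2 \<le> (norm x * norm y)\<^sup>2"
    using False by (simp add: pos_divide_le_eq power_mult_distrib)
  then show ?thesis by (rule power2_le_imp_le) simp
qed simp

lemma cinner_eq_0_if_norm_minimal:
  fixes u x :: "'a::complex_inner"
  assumes "\<And>t. norm u \<le> norm (u + t *\<^sub>C x)"
  shows "cinner u x = 0"
proof (cases "x = 0")
  case False
  have "(norm u)\<^sup>2 \<le> (norm u)\<^sup>2 - (cmod (cinner u x))\<^sup>2 / (norm x)\<^sup>2"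
    using assms by (simp flip: norm_sq_remove_component[OF False] add: power_mono)
  then show ?thesis using False by (simp add: divide_le_0_iff)
qed simp

lemma bounded_linear_cinner_right: "bounded_linear (cinner (y::'a::complex_inner))"
proof (rule bounded_linear_intro[where K = "norm y"])
  show "cinner y (x + z) = cinner y x + cinner y z" for x z by (rule cinner_add_right)
  show "cinner y (r *\<^sub>R x) = r *\<^sub>R cinner y x" for r x
    by (simp add: scaleR_scaleC cinner_scaleC_right scaleR_conv_of_real)
  show "norm (cinner y x) \<le> norm x * norm y" for x
    using cmod_cinner_le[of y x] by (simp add: mult.commute)
qed

lemma bounded_linear_cinner_left: "bounded_linear (\<lambda>z::'a::complex_inner. cinner z y)"
proof (rule bounded_linear_intro[where K = "norm y"])
  show "cinner (x + z) y = cinner x y + cinner z y" for x z by (rule cinner_add_left)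
  show "cinner (r *\<^sub>R x) y = r *\<^sub>R cinner x y" for r x
    by (simp add: scaleR_scaleC cinner_scaleC_left scaleR_conv_of_real)
  show "norm (cinner x y) \<le> norm x * norm y" for x by (rule cmod_cinner_le)
qed

lemma bounded_linear_if_cblinear:
  assumes "cblinear T" shows "bounded_linear T"
proof -
  obtain K where "\<And>x. norm (T x) \<le> norm x * K" using assms unfolding cblinear_def by blast
  with assms show ?thesis
    unfolding cblinear_def by (intro bounded_linear_intro[where K = K]) (auto simp: scaleR_scaleC)
qed

lemma cblinear_diff: "cblinear T \<Longrightarrow> T (x - y) = T x - T y"
  by (simp add: bounded_linear_if_cblinear linear_diff bounded_linear.linear)

section \<open>Riesz representation and adjoints\<close>

lemma Cauchy_if_norm_minimizing:
  fixes xs :: "nat \<Rightarrow> 'a::complex_inner"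
  assumes C: "convex C" "\<And>n. xs n \<in> C" and d: "\<And>v. v \<in> C \<Longrightarrow> d \<le> norm v"
    and lim: "(\<lambda>n. norm (xs n)) \<longlonglongrightarrow> d"
  shows "Cauchy xs"
proof (rule CauchyI)
  fix \<epsilon> :: real assume "0 < \<epsilon>"
  define e where "e n = (norm (xs n))\<^sup>2 - d\<^sup>2" for n
  have "0 \<le> d" using lim by (rule LIMSEQ_le_const) simp
  have "e \<longlonglongrightarrow> 0" unfolding e_def using lim by (intro LIM_zero tendsto_power)
  from LIMSEQ_D[OF this, of "\<epsilon>\<^sup>2 / 4"] obtain N where N: "\<And>n. n \<ge> N \<Longrightarrow> \<bar>e n\<bar> < \<epsilon>\<^sup>2 / 4"
    using \<open>0 < \<epsilon>\<close> by auto
  have "norm (xs m - xs n) < \<epsilon>" if "m \<ge> N" "n \<ge> N" for m n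
  proof -
    have "(1/2) *\<^sub>R xs m + (1/2) *\<^sub>R xs n \<in> C" by (rule convexD) (use C in auto)
    moreover have "norm ((1/2) *\<^sub>R xs m + (1/2) *\<^sub>R xs n) = norm (xs m + xs n) / 2"
      by (simp flip: scaleR_add_right)
    ultimately have "2 * d \<le> norm (xs m + xs n)" using d by fastforce
    then have "(2 * d)\<^sup>2 \<le> (norm (xs m + xs n))\<^sup>2" using \<open>0 \<le> d\<close> by (intro power_mono) auto
    then have "(norm (xs m - xs n))\<^sup>2 \<le> 2 * e m + 2 * e n"
      using parallelogram_law[of "xs m" "xs n"] by (simp add: e_def power_mult_distrib)
    also have "\<dots> < \<epsilon>\<^sup>2" using N[OF \<open>m \<ge> N\<close>] N[OF \<open>n \<ge> N\<close>] by linarith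
    finally show ?thesis using \<open>0 < \<epsilon>\<close> by (simp add: power_less_imp_less_base)
  qed
  then show "\<exists>N. \<forall>m\<ge>N. \<forall>n\<ge>N. norm (xs m - xs n) < \<epsilon>" by blast
qed

lemma closed_convex_has_min_norm:
  fixes C :: "'a::{complex_inner, complete_space} set"
  assumes "closed C" "convex C" "C \<noteq> {}"
  obtains u where "u \<in> C" "\<And>v. v \<in> C \<Longrightarrow> norm u \<le> norm v"
proof -
  define d where "d = Inf (norm ` C)"
  have bdd: "bdd_below (norm ` C)" by (rule bdd_belowI[of _ 0]) auto
  have d_le: "d \<le> norm v" if "v \<in> C" for v unfolding d_def using bdd that by (simp add: cInf_lower)
  have "\<exists>x\<in>C. norm x < d + inverse (real (Suc n))" for n
    using cInf_less_iff[OF _ bdd, of "d + inverse (real (Suc n))"] \<open>C \<noteq> {}\<close> by (simp add: d_def)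
  then obtain xs where xs: "\<And>n. xs n \<in> C" "\<And>n. norm (xs n) < d + inverse (real (Suc n))"
    by metis
  have "(\<lambda>n. norm (xs n)) \<longlonglongrightarrow> d"
  proof (rule tendsto_sandwich)
    show "\<forall>\<^sub>F n in sequentially. d \<le> norm (xs n)" by (simp add: d_le xs(1))
    show "\<forall>\<^sub>F n in sequentially. norm (xs n) \<le> d + inverse (real (Suc n))"
      by (rule always_eventually) (use xs(2) less_imp_le in blast)
    show "(\<lambda>n. d + inverse (real (Suc n))) \<longlonglongrightarrow> d"
      using tendsto_add[OF tendsto_const LIMSEQ_inverse_real_of_nat, of d] by simp
  qed simp
  moreover from this have "Cauchy xs" using assms(2) xs(1) d_le by (intro Cauchy_if_norm_minimizing)
  then obtain u where u: "xs \<longlonglongrightarrow> u" using Cauchy_convergent_iff convergent_def by blast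
  ultimately have "norm u = d" using tendsto_norm LIMSEQ_unique by blast
  moreover have "u \<in> C" using assms(1) xs(1) u by (rule closed_sequentially)
  ultimately show thesis using d_le that by auto
qed

lemma riesz_representation:
  fixes f :: "'a::chilbert_space \<Rightarrow> complex"
  assumes f: "bounded_linear f" and f_scaleC: "\<And>c x. f (c *\<^sub>C x) = c * f x"
  shows "\<exists>z. \<forall>x. f x = cinner z x"
proof (cases "\<forall>x. f x = 0")
  case False
  then obtain x1 where "f x1 \<noteq> 0" by blast
  have f_add: "f (x + y) = f x + f y" and f_diff: "f (x - y) = f x - f y" for x y
    using f by (simp_all add: bounded_linear.linear linear_add linear_diff)
  \<comment> \<open>the vector of least norm on the hyperplane \<open>f = 1\<close> is orthogonal to \<open>ker f\<close>\<close>
  define C where "C = {x. f x = 1}"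
  have closed: "closed C"
    unfolding C_def using f by (intro closed_Collect_eq linear_continuous_on continuous_on_const)
  have convex: "convex C"
    unfolding C_def convex_def
    using f by (simp add: bounded_linear.linear linear_add linear_scale scaleR_conv_of_real
        flip: of_real_add)
  have "(1 / f x1) *\<^sub>C x1 \<in> C" using \<open>f x1 \<noteq> 0\<close> by (simp add: C_def f_scaleC)
  then obtain u where u: "u \<in> C" "\<And>v. v \<in> C \<Longrightarrow> norm u \<le> norm v"
    using closed_convex_has_min_norm[OF closed convex] by blast
  have ker_orth: "cinner u x = 0" if "f x = 0" for x
  proof (rule cinner_eq_0_if_norm_minimal)
    show "norm u \<le> norm (u + t *\<^sub>C x)" for t
      using u that by (simp add: C_def f_add f_scaleC)
  qed
  have uu: "cinner u u \<noteq> 0" using u(1) f by (auto simp: C_def bounded_linear.linear linear_0)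
  have "f x = cinner ((1 / cnj (cinner u u)) *\<^sub>C u) x" for x
  proof -
    have "cinner u (x - f x *\<^sub>C u) = 0"
      using u(1) by (intro ker_orth) (simp add: C_def f_diff f_scaleC)
    then have "cinner u x = f x * cinner u u" by (simp add: cinner_diff_right cinner_scaleC_right)
    with uu show ?thesis by (simp add: cinner_scaleC_left)
  qed
  then show ?thesis by blast
qed (intro exI[of _ 0], simp)

lemma cinner_adj:
  assumes "cblinear T"
  shows "cinner (T x) y = cinner x (adj T y)"
proof -
  have "\<exists>z. \<forall>x. cinner y (T x) = cinner z x" for y
  proof (rule riesz_representation)
    show "bounded_linear (\<lambda>x. cinner y (T x))"
      using bounded_linear_cinner_right bounded_linear_if_cblinear[OF assms]
      by (rule bounded_linear_compose)
    show "cinner y (T (c *\<^sub>C x)) = c * cinner y (T x)" for c x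
      using assms by (simp add: cblinear_def cinner_scaleC_right)
  qed
  then obtain S where "\<And>y x. cinner y (T x) = cinner (S y) x" by metis
  then have S: "\<forall>x y. cinner (T x) y = cinner x (S y)"
    using cinner_conj by metis
  have "S' = S" if "\<forall>x y. cinner (T x) y = cinner x (S' y)" for S'
  proof
    show "S' y = S y" for y by (rule cinner_right_eqI) (use that S in metis)
  qed
  with S have "\<forall>x y. cinner (T x) y = cinner x (adj T y)"
    unfolding adj_def by (rule theI)
  then show ?thesis by blast
qed

lemma cinner_adj_left: "cblinear T \<Longrightarrow> cinner (adj T x) y = cinner x (T y)"
  using cinner_conj[of "adj T x" y] cinner_conj[of x "T y"] cinner_adj[of T y x] by simp

lemma adj_diff: "cblinear T \<Longrightarrow> adj T (x - y) = adj T x - adj T y"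
  by (rule cinner_right_eqI) (simp add: cinner_adj[symmetric] cinner_diff_right)

section \<open>Orthogonal projections onto closed spans\<close>

lemma closure_cspan_superset: "S \<subseteq> closure (cspan S)"
proof
  fix s assume "s \<in> S"
  then have "s \<in> cspan S" unfolding cspan_def
    by (intro CollectI exI[of _ "{s}"] exI[of _ "\<lambda>_. 1"]) (simp add: scaleC_one)
  then show "s \<in> closure (cspan S)" using closure_subset by blast
qed

lemma cinner_closure_cspan_eq_0:
  assumes "\<And>s. s \<in> S \<Longrightarrow> cinner s y = 0" and "z \<in> closure (cspan S)"
  shows "cinner z (y::'a::complex_inner) = 0"
proof -
  have "cspan S \<subseteq> {z. cinner z y = 0}"
  proof
    fix z assume "z \<in> cspan S"
    then obtain F c where "F \<subseteq> S" "z = (\<Sum>s\<in>F. c s *\<^sub>C s)" unfolding cspan_def by blast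
    moreover from this have "\<forall>s\<in>F. cinner s y = 0" using assms(1) by blast
    ultimately show "z \<in> {z. cinner z y = 0}" by (simp add: cinner_sum_left cinner_scaleC_left)
  qed
  moreover have "closed {z. cinner z y = 0}"
    by (intro closed_Collect_eq linear_continuous_on bounded_linear_cinner_left continuous_on_const)
  ultimately have "closure (cspan S) \<subseteq> {z. cinner z y = 0}" by (rule closure_minimal)
  then show ?thesis using assms(2) by blast
qed

lemma orth_proj_id_on: "is_orth_proj P C \<Longrightarrow> x \<in> C \<Longrightarrow> P x = x"
proof -
  assume P: "is_orth_proj P C" and "x \<in> C"
  then have "cinner x (x - P x) = 0" "cinner (P x) (x - P x) = 0"
    unfolding is_orth_proj_def by auto
  then have "cinner (x - P x) (x - P x) = 0" by (simp add: cinner_diff_left)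
  then show ?thesis by simp
qed

lemma cinner_orth_proj_commute: "is_orth_proj P C \<Longrightarrow> cinner (P x) y = cinner x (P y)"
proof -
  assume P: "is_orth_proj P C"
  then have "cinner (P x) (y - P y) = 0" "cinner (P y) (x - P x) = 0"
    unfolding is_orth_proj_def by auto
  then have "cinner (P x) y = cinner (P x) (P y)" "cinner (P y) x = cinner (P y) (P x)"
    by (simp_all add: cinner_diff_right)
  then show ?thesis using cinner_conj[of "P x" "P y"] cinner_conj[of x "P y"] by simp
qed

lemma orth_proj_diff: "is_orth_proj P C \<Longrightarrow> P (x - y) = P x - P y"
  by (rule cinner_right_eqI) (simp add: cinner_orth_proj_commute[symmetric] cinner_diff_right)

lemma orth_proj_idem: "is_orth_proj P C \<Longrightarrow> P (P x) = P x"
  by (rule orth_proj_id_on) (auto simp: is_orth_proj_def)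

lemma orth_proj_eq_0:
  assumes P: "is_orth_proj P (closure (cspan S))" and "\<And>s. s \<in> S \<Longrightarrow> cinner s y = 0"
  shows "P y = 0"
proof -
  have "P y \<in> closure (cspan S)" using P unfolding is_orth_proj_def by blast
  then have "cinner (P y) y = 0" using assms(2) cinner_closure_cspan_eq_0 by blast
  then have "cinner (P y) (P y) = 0"
    by (simp add: cinner_orth_proj_commute[OF P, symmetric] orth_proj_idem[OF P])
  then show ?thesis by simp
qed

lemma adj_orth_proj:
  assumes V: "cblinear V" and P: "is_orth_proj P C" and PV: "\<And>h. P (V h) = V h"
  shows "adj V (P x) = adj V x"
proof (rule cinner_right_eqI)
  fix z
  show "cinner z (adj V (P x)) = cinner z (adj V x)"
    by (simp flip: cinner_adj[OF V] add: cinner_orth_proj_commute[OF P, symmetric] PV)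
qed

lemma orth_proj_closure_cspan_id_on: "is_orth_proj P (closure (cspan X)) \<Longrightarrow> x \<in> X \<Longrightarrow> P x = x"
  using orth_proj_id_on closure_cspan_superset by blast

section \<open>Compressions of two operator families\<close>

lemma cinner_comp_adj_commute:
  "cblinear V \<Longrightarrow> cinner (V (adj V x)) y = cinner x (V (adj V y))"
  by (simp add: cinner_adj cinner_adj_left)

lemma adj_eq_iff_cinner:
  "cblinear V \<Longrightarrow> adj V x = adj V y \<longleftrightarrow> (\<forall>k. cinner (V k) x = cinner (V k) y)"
  by (metis cinner_adj cinner_right_eqI)

lemma adj_comp_idem_if_comp_adj_idem:
  assumes V: "cblinear V" and W: "\<And>x. V (adj V (V (adj V x))) = V (adj V x)"
  shows "adj V (V (adj V (V h))) = adj V (V h)"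
proof -
  define Q where "Q x = adj V (V x)" for x
  have Q_diff: "Q (x - y) = Q x - Q y" for x y
    by (simp add: Q_def cblinear_diff[OF V] adj_diff[OF V])
  define y where "y = h - Q h"
  have "Q (Q (Q h)) = Q (Q h)" using arg_cong[OF W[of "V h"], of "adj V"] by (simp add: Q_def)
  then have "Q (Q y) = 0" by (simp add: y_def Q_diff)
  moreover have "cinner (Q y) (Q y) = cinner y (Q (Q y))"
    by (simp add: Q_def cinner_adj[OF V] cinner_adj_left[OF V])
  ultimately have "Q y = 0" by simp
  then have "Q (Q h) = Q h" by (simp add: y_def Q_diff)
  then show ?thesis by (simp add: Q_def)
qed

lemma partial_isometry_if_adj_comp_idem:
  assumes V: "cblinear V" and Q: "\<And>h. adj V (V (adj V (V h))) = adj V (V h)"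
  shows "V (adj V (V h)) = V h"
proof -
  define y where "y = h - adj V (V h)"
  have "adj V (V y) = 0" using Q by (simp add: y_def cblinear_diff[OF V] adj_diff[OF V])
  moreover have "cinner (V y) (V y) = cinner y (adj V (V y))" by (rule cinner_adj[OF V])
  ultimately have "V y = 0" by simp
  then show ?thesis by (simp add: y_def cblinear_diff[OF V])
qed

definition unital_star_closed :: "('k::chilbert_space \<Rightarrow> 'k) set \<Rightarrow> bool" where
  "unital_star_closed S \<longleftrightarrow> id \<in> S \<and> (\<forall>s\<in>S. cblinear s \<and> adj s \<in> S)"

text \<open>For \<open>S = \<pi>(\<A>)\<close> and \<open>T = E(\<O>(X))\<close> this says
  \<open>V\<^sup>* \<pi>(a) E(A) V = V\<^sup>* \<pi>(a) V \<cdot> V\<^sup>* E(A) V\<close>, i.e. \<open>\<I>(A, a) = \<phi>(a) \<mu>(A)\<close>.\<close>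
definition decomposable_compression ::
  "('h::chilbert_space \<Rightarrow> 'k::chilbert_space) \<Rightarrow> ('k \<Rightarrow> 'k) set \<Rightarrow> ('k \<Rightarrow> 'k) set \<Rightarrow> bool" where
  "decomposable_compression V S T \<longleftrightarrow>
     (\<forall>s\<in>S. \<forall>t\<in>T. adj V \<circ> s \<circ> t \<circ> V = adj V \<circ> s \<circ> V \<circ> adj V \<circ> t \<circ> V)"

lemma decomposable_compression_cinner_iff:
  assumes "cblinear V"
  shows "decomposable_compression V S T \<longleftrightarrow>
    (\<forall>s\<in>S. \<forall>t\<in>T. \<forall>h k. cinner (V k) (s (t (V h))) = cinner (V k) (s (V (adj V (t (V h))))))"
  unfolding decomposable_compression_def fun_eq_iff comp_def adj_eq_iff_cinner[OF assms] by blast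

text \<open>\<open>V\<^sup>* t s V\<close> is the adjoint of \<open>V\<^sup>* s\<^sup>* t\<^sup>* V\<close>.\<close>
lemma decomposable_compression_swap:
  assumes V: "cblinear V" and S: "unital_star_closed S" and T: "unital_star_closed T"
    and dec: "decomposable_compression V S T"
  shows "decomposable_compression V T S"
  unfolding decomposable_compression_cinner_iff[OF V]
proof (intro ballI allI)
  fix t s h k assume "t \<in> T" "s \<in> S"
  then have s: "cblinear s" "adj s \<in> S" and t: "cblinear t" "adj t \<in> T"
    using S T by (auto simp: unital_star_closed_def)
  have "cinner (V k) (t (s (V h))) = cnj (cinner (V h) (adj s (adj t (V k))))"
    by (simp add: cinner_adj_left[OF t(1), symmetric] cinner_adj_left[OF s(1), symmetric]
        flip: cinner_conj)
  also have "\<dots> = cnj (cinner (V h) (adj s (V (adj V (adj t (V k))))))"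
    using dec s(2) t(2) by (simp add: decomposable_compression_cinner_iff[OF V])
  also have "\<dots> = cinner (V k) (t (V (adj V (s (V h)))))"
    by (simp add: cinner_adj_left[OF s(1)] cinner_comp_adj_commute[OF V] cinner_adj_left[OF t(1)]
        flip: cinner_conj)
  finally show "cinner (V k) (t (s (V h))) = cinner (V k) (t (V (adj V (s (V h)))))" .
qed

lemma orth_proj_fixes_range:
  assumes "id \<in> S" and P: "is_orth_proj P (closure (cspan {s (V h) | s h. s \<in> S}))"
  shows "P (V h) = V h"
proof (rule orth_proj_closure_cspan_id_on[OF P])
  have "V h = id (V h) \<and> id \<in> S" using assms(1) by simp
  then show "V h \<in> {s (V h) | s h. s \<in> S}" by blast
qed

lemma orth_proj_comp_eq_if_decomposable:
  assumes V: "cblinear V" and S: "unital_star_closed S"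
    and P: "is_orth_proj P (closure (cspan {s (V h) | s h. s \<in> S}))"
    and dec: "decomposable_compression V S T" and "t \<in> T"
  shows "P (t (V (adj V x))) = V (adj V (t (V (adj V x))))"
proof -
  define y where "y = t (V (adj V x)) - V (adj V (t (V (adj V x))))"
  have "P y = 0"
  proof (rule orth_proj_eq_0[OF P])
    fix z assume "z \<in> {s (V h) | s h. s \<in> S}"
    then obtain s h where z: "z = s (V h)" and "s \<in> S" by blast
    then have s: "cblinear s" "adj s \<in> S" using S by (auto simp: unital_star_closed_def)
    have "cinner (V h) (adj s (t (V (adj V x)))) = cinner (V h) (adj s (V (adj V (t (V (adj V x))))))"
      using dec s(2) \<open>t \<in> T\<close> by (simp add: decomposable_compression_cinner_iff[OF V])
    then show "cinner z y = 0" by (simp add: z y_def cinner_diff_right cinner_adj[OF s(1)])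
  qed
  moreover have "P (V (adj V u)) = V (adj V u)" for u
    using S by (intro orth_proj_fixes_range[OF _ P]) (simp add: unital_star_closed_def)
  ultimately show ?thesis by (simp add: y_def orth_proj_diff[OF P])
qed

lemma compression_orth_proj_eq_if_decomposable:
  assumes V: "cblinear V" and S: "unital_star_closed S" and T: "unital_star_closed T"
    and P: "is_orth_proj P (closure (cspan {s (V h) | s h. s \<in> S}))"
    and dec: "decomposable_compression V S T" and "t \<in> T"
  shows "V (adj V (t (P x))) = V (adj V (t (V (adj V x))))"
proof (rule cinner_right_eqI)
  fix z
  have t: "cblinear t" "adj t \<in> T" using T \<open>t \<in> T\<close> by (auto simp: unital_star_closed_def)
  have "cinner z (V (adj V (t (P x)))) = cinner (P (adj t (V (adj V z)))) x"
    by (simp add: cinner_comp_adj_commute[OF V, symmetric] cinner_adj_left[OF t(1), symmetric]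
        cinner_orth_proj_commute[OF P])
  also have "\<dots> = cinner (V (adj V (adj t (V (adj V z))))) x"
    using orth_proj_comp_eq_if_decomposable[OF V S P dec t(2)] by simp
  also have "\<dots> = cinner z (V (adj V (t (V (adj V x)))))"
    by (simp add: cinner_comp_adj_commute[OF V] cinner_adj_left[OF t(1)])
  finally show "cinner z (V (adj V (t (P x)))) = cinner z (V (adj V (t (V (adj V x)))))" .
qed

text \<open>Only the first identity of (ii) enters: for \<open>t = id\<close> it makes \<open>V V\<^sup>*\<close> idempotent.\<close>
lemma decomposable_if_orth_proj_comp_eq:
  assumes V: "cblinear V" and S: "unital_star_closed S" and "id \<in> T"
    and P: "is_orth_proj P (closure (cspan {s (V h) | s h. s \<in> S}))"
    and H: "\<And>t x. t \<in> T \<Longrightarrow> P (t (V (adj V x))) = V (adj V (t (V (adj V x))))"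
  shows "decomposable_compression V S T"
  unfolding decomposable_compression_cinner_iff[OF V]
proof (intro ballI allI)
  fix s t h k assume "s \<in> S" "t \<in> T"
  have PV: "P (V u) = V u" for u
    using S by (intro orth_proj_fixes_range[OF _ P]) (simp add: unital_star_closed_def)
  have "V (adj V (V (adj V x))) = V (adj V x)" for x using H[OF \<open>id \<in> T\<close>] PV by simp
  then have "adj V (V (adj V (V u))) = adj V (V u)" for u
    by (rule adj_comp_idem_if_comp_adj_idem[OF V])
  then have VQ: "V (adj V (V u)) = V u" for u by (rule partial_isometry_if_adj_comp_idem[OF V])
  define y where "y = t (V h) - V (adj V (t (V h)))"
  have "P y = 0" using H[OF \<open>t \<in> T\<close>, of "V h"] by (simp add: y_def VQ PV orth_proj_diff[OF P])
  have s: "cblinear s" "adj s \<in> S" using S \<open>s \<in> S\<close> by (auto simp: unital_star_closed_def)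
  have "P (adj s (V k)) = adj s (V k)"
    using s(2) by (intro orth_proj_closure_cspan_id_on[OF P]) blast
  then have "cinner (V k) (s y) = cinner (adj s (V k)) (P y)"
    by (simp add: cinner_adj_left[OF s(1)] cinner_orth_proj_commute[OF P, symmetric])
  also have "\<dots> = 0" using \<open>P y = 0\<close> by simp
  finally show "cinner (V k) (s (t (V h))) = cinner (V k) (s (V (adj V (t (V h)))))"
    by (simp add: y_def cblinear_diff[OF s(1)] cinner_diff_right)
qed

lemma partial_isometry_if_decomposable:
  assumes V: "cblinear V" and "id \<in> S" "id \<in> T" and dec: "decomposable_compression V S T"
  shows "V (adj V (V h)) = V h"
proof (rule partial_isometry_if_adj_comp_idem[OF V])
  have "adj V \<circ> id \<circ> id \<circ> V = adj V \<circ> id \<circ> V \<circ> adj V \<circ> id \<circ> V"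
    using dec assms(2,3) unfolding decomposable_compression_def by blast
  then show "adj V (V (adj V (V u))) = adj V (V u)" for u by (simp add: fun_eq_iff)
qed

lemma decomposable_compression_iff_left_proj:
  assumes V: "cblinear V" and S: "unital_star_closed S" and T: "unital_star_closed T"
    and P: "is_orth_proj P (closure (cspan {s (V h) | s h. s \<in> S}))"
  shows "decomposable_compression V S T \<longleftrightarrow>
    (\<forall>t\<in>T. P \<circ> t \<circ> P \<circ> V \<circ> adj V = V \<circ> adj V \<circ> P \<circ> t \<circ> P \<circ> V \<circ> adj V \<and>
            V \<circ> adj V \<circ> P \<circ> t \<circ> P \<circ> V \<circ> adj V = V \<circ> adj V \<circ> P \<circ> t \<circ> P)"
proof -
  have PV: "P (V u) = V u" for u
    using S by (intro orth_proj_fixes_range[OF _ P]) (simp add: unital_star_closed_def)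
  have adjP: "adj V (P x) = adj V x" for x
    by (rule adj_orth_proj[OF V P PV])
  show ?thesis
  proof
    assume dec: "decomposable_compression V S T"
    have "V (adj V (V h)) = V h" for h
      using S T by (intro partial_isometry_if_decomposable[OF V _ _ dec])
        (simp_all add: unital_star_closed_def)
    then show "\<forall>t\<in>T. P \<circ> t \<circ> P \<circ> V \<circ> adj V = V \<circ> adj V \<circ> P \<circ> t \<circ> P \<circ> V \<circ> adj V \<and>
            V \<circ> adj V \<circ> P \<circ> t \<circ> P \<circ> V \<circ> adj V = V \<circ> adj V \<circ> P \<circ> t \<circ> P"
      using orth_proj_comp_eq_if_decomposable[OF V S P dec]
        compression_orth_proj_eq_if_decomposable[OF V S T P dec]
      by (simp add: fun_eq_iff PV adjP)
  next
    assume "\<forall>t\<in>T. P \<circ> t \<circ> P \<circ> V \<circ> adj V = V \<circ> adj V \<circ> P \<circ> t \<circ> P \<circ> V \<circ> adj V \<and>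
            V \<circ> adj V \<circ> P \<circ> t \<circ> P \<circ> V \<circ> adj V = V \<circ> adj V \<circ> P \<circ> t \<circ> P"
    then have H: "\<And>t x. t \<in> T \<Longrightarrow> P (t (V (adj V x))) = V (adj V (t (V (adj V x))))"
      by (simp add: fun_eq_iff PV adjP)
    have idT: "id \<in> T" using T by (simp add: unital_star_closed_def)
    show "decomposable_compression V S T"
      using H by (rule decomposable_if_orth_proj_comp_eq[OF V S idT P])
  qed
qed

lemma decomposable_compression_iff_right_proj:
  assumes V: "cblinear V" and S: "unital_star_closed S" and T: "unital_star_closed T"
    and P: "is_orth_proj P (closure (cspan {t (V h) | t h. t \<in> T}))"
  shows "decomposable_compression V S T \<longleftrightarrow>
    (\<forall>s\<in>S. P \<circ> s \<circ> P \<circ> V \<circ> adj V = V \<circ> adj V \<circ> P \<circ> s \<circ> P \<circ> V \<circ> adj V \<and>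
            V \<circ> adj V \<circ> P \<circ> s \<circ> P \<circ> V \<circ> adj V = V \<circ> adj V \<circ> s \<circ> P)"
proof -
  have PV: "P (V u) = V u" for u
    using T by (intro orth_proj_fixes_range[OF _ P]) (simp add: unital_star_closed_def)
  have "V \<circ> adj V \<circ> P \<circ> s \<circ> P = V \<circ> adj V \<circ> s \<circ> P" for s
    by (simp add: fun_eq_iff adj_orth_proj[OF V P PV])
  moreover have "decomposable_compression V S T \<longleftrightarrow> decomposable_compression V T S"
    using decomposable_compression_swap[OF V S T] decomposable_compression_swap[OF V T S] by blast
  ultimately show ?thesis by (simp only: decomposable_compression_iff_left_proj[OF V T S P])
qed

lemma unital_star_closed_range:
  assumes "unital_star_hom \<pi>"
  shows "unital_star_closed (range \<pi>)"
proof -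
  have "id = \<pi> 1" "cblinear (\<pi> a)" "adj (\<pi> a) = \<pi> (cstar a)" for a
    using assms by (simp_all add: unital_star_hom_def)
  then show ?thesis unfolding unital_star_closed_def by auto
qed

lemma unital_star_closed_spectral_measure:
  assumes "spectral_measure M E"
  shows "unital_star_closed (E ` sets M)"
proof -
  have "id = E (space M)" "space M \<in> sets M" using assms by (simp_all add: spectral_measure_def)
  moreover have "cblinear (E A)" "adj (E A) = E A" if "A \<in> sets M" for A
    using assms that by (simp_all add: spectral_measure_def is_proj_def)
  ultimately show ?thesis unfolding unital_star_closed_def by auto
qed

lemma decomposable_iff_decomposable_compression:
  assumes "minimal_bidilation M I \<pi> E V"
  shows "decomposable M I \<longleftrightarrow> decomposable_compression V (range \<pi>) (E ` sets M)"
proof -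
  have I: "I A a = adj V \<circ> \<pi> a \<circ> E A \<circ> V" if "A \<in> sets M" for A a
    using assms that by (simp add: minimal_bidilation_def)
  have "\<pi> 1 = id" "E (space M) = id"
    using assms by (simp_all add: minimal_bidilation_def unital_star_hom_def spectral_measure_def)
  then have "instr_channel M I a \<circ> instr_obs I A = adj V \<circ> \<pi> a \<circ> V \<circ> adj V \<circ> E A \<circ> V"
    if "A \<in> sets M" for A a
    using that by (simp add: instr_channel_def instr_obs_def I fun_eq_iff)
  then show ?thesis
    unfolding decomposable_def decomposable_compression_def by (auto simp: I)
qed

theorem theorem2p29:
  fixes M :: "'x measure"
    and I :: "'x set \<Rightarrow> 'a::cstar_algebra_1 \<Rightarrow> 'h::chilbert_space \<Rightarrow> 'h"
    and \<pi> :: "'a \<Rightarrow> 'k::chilbert_space \<Rightarrow> 'k"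
    and E :: "'x set \<Rightarrow> 'k \<Rightarrow> 'k"
    and V :: "'h \<Rightarrow> 'k"
    and P1 P2 :: "'k \<Rightarrow> 'k"
  assumes "cp_instrument M I"
    and "minimal_bidilation M I \<pi> E V"
    and "is_orth_proj P1 (closure (cspan {\<pi> a (V h) | a h. True}))"
    and "is_orth_proj P2 (closure (cspan {E A (V h) | A h. A \<in> sets M}))"
  shows "(decomposable M I \<longleftrightarrow>
           (\<forall>A\<in>sets M.
              P1 \<circ> E A \<circ> P1 \<circ> V \<circ> adj V = V \<circ> adj V \<circ> P1 \<circ> E A \<circ> P1 \<circ> V \<circ> adj V \<and>
              V \<circ> adj V \<circ> P1 \<circ> E A \<circ> P1 \<circ> V \<circ> adj V = V \<circ> adj V \<circ> P1 \<circ> E A \<circ> P1))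
       \<and> (decomposable M I \<longleftrightarrow>
           (\<forall>a.
              P2 \<circ> \<pi> a \<circ> P2 \<circ> V \<circ> adj V = V \<circ> adj V \<circ> P2 \<circ> \<pi> a \<circ> P2 \<circ> V \<circ> adj V \<and>
              V \<circ> adj V \<circ> P2 \<circ> \<pi> a \<circ> P2 \<circ> V \<circ> adj V = V \<circ> adj V \<circ> \<pi> a \<circ> P2))"
proof -
  have V: "cblinear V" and S: "unital_star_closed (range \<pi>)" and T: "unital_star_closed (E ` sets M)"
    using assms(2) unital_star_closed_range unital_star_closed_spectral_measure
    by (auto simp: minimal_bidilation_def)
  have "{\<pi> a (V h) | a h. True} = {s (V h) | s h. s \<in> range \<pi>}"
    and "{E A (V h) | A h. A \<in> sets M} = {t (V h) | t h. t \<in> E ` sets M}" by blast+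
  then have P1: "is_orth_proj P1 (closure (cspan {s (V h) | s h. s \<in> range \<pi>}))"
    and P2: "is_orth_proj P2 (closure (cspan {t (V h) | t h. t \<in> E ` sets M}))"
    using assms(3,4) by simp_all
  show ?thesis
    using decomposable_compression_iff_left_proj[OF V S T P1]
      decomposable_compression_iff_right_proj[OF V S T P2]
    by (simp add: decomposable_iff_decomposable_compression[OF assms(2)])
qed

end
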